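(* Let $X$ be a nonempty finite set and let $NG$ be an NG-group on $X$. Then the directed multigraph $(NG)_{dig}$ is not strongly connected.
   Context: An NG-group on a set $X$ is a set of maps $X \to X$ that forms a group under composition of functions and is not contained in the symmetric group $\mathrm{Sym}(X)$. The directed multigraph $(NG)_{dig}$ has vertex set $X$. For every $f \in NG$ and every $x \in X$ there is one arc from $x$ to $f(x)$. A digraph is strongly connected if for every ordered pair of vertices $(u, v)$ there is a directed path from $u$ to $v$. *)

theory Defs
  imports "HOL-Algebra.Group" "HOL-Library.FuncSet"
begin

definition NG_group :: "'a set \<Rightarrow> ('a \<Rightarrow> 'a) set \<Rightarrow> bool" where
  "NG_group X G \<longleftrightarrow>
     G \<subseteq> (X \<rightarrow>\<^sub>E X) \<and>
     (\<exists>e. group \<lparr>carrier = G, monoid.mult = (\<lambda>f g. compose X f g), one = e\<rparr>) \<and>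
     \<not> G \<subseteq> {f. bij_betw f X X}"

text \<open>Arc relation of the directed multigraph (NG)_dig (multiplicities are
  irrelevant for reachability).\<close>

definition NG_dig_arcs :: "'a set \<Rightarrow> ('a \<Rightarrow> 'a) set \<Rightarrow> ('a \<times> 'a) set" where
  "NG_dig_arcs X G = {(x, f x) | x f. x \<in> X \<and> f \<in> G}"

definition strongly_connected :: "'a set \<Rightarrow> ('a \<times> 'a) set \<Rightarrow> bool" where
  "strongly_connected V E \<longleftrightarrow> (\<forall>u\<in>V. \<forall>v\<in>V. (u, v) \<in> E\<^sup>*)"

end

theory Submission
  imports Defs
begin

text \<open>The identity e of an NG-group is an idempotent map that fixes every point in the image of
  every group element. It cannot be the identity on X, for then every element would be invertible
  under composition, hence a bijection. So e moves some point v, and v lies in no image: it has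
  no incoming arc, although a path from e v to v would have to end with one.\<close>

lemma compose_group_one_fixes_image:
  assumes "group \<lparr>carrier = G, mult = compose X, one = e\<rparr>" and "f \<in> G" and "x \<in> X"
  shows "e (f x) = f x"
proof -
  interpret group "\<lparr>carrier = G, mult = compose X, one = e\<rparr>" by (fact assms(1))
  have "compose X e f = f" using l_one[of f] assms(2) by simp
  then show ?thesis using assms(3) by (metis compose_eq)
qed

lemma compose_group_bij_if_one_id:
  assumes "group \<lparr>carrier = G, mult = compose X, one = e\<rparr>" and "G \<subseteq> X \<rightarrow>\<^sub>E X"
    and "\<forall>x\<in>X. e x = x" and "f \<in> G"
  shows "bij_betw f X X"
proof -
  interpret group "\<lparr>carrier = G, mult = compose X, one = e\<rparr>" by (fact assms(1))
  obtain g where g: "g \<in> G" "compose X g f = e" "compose X f g = e"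
    using inv_closed[of f] l_inv[of f] r_inv[of f] assms(4) by auto
  show ?thesis
  proof (rule bij_betwI)
    show "f \<in> X \<rightarrow> X" "g \<in> X \<rightarrow> X" using assms(2,4) g(1) by auto
    show "g (f x) = x" if "x \<in> X" for x using g(2) assms(3) that by (metis compose_eq)
    show "f (g y) = y" if "y \<in> X" for y using g(3) assms(3) that by (metis compose_eq)
  qed
qed

lemma strongly_connected_in_arc:
  assumes "strongly_connected V E" and "u \<in> V" and "v \<in> V" and "u \<noteq> v"
  obtains z where "(z, v) \<in> E"
proof -
  have "(u, v) \<in> E\<^sup>*" using assms(1-3) unfolding strongly_connected_def by blast
  with assms(4) show thesis by (metis rtranclE that)
qed

theorem mainTheorem5:
  fixes X :: "'a set" and NG :: "('a \<Rightarrow> 'a) set"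
  assumes "finite X" and "X \<noteq> {}" and "NG_group X NG"
  shows "\<not> strongly_connected X (NG_dig_arcs X NG)"
proof
  assume sc: "strongly_connected X (NG_dig_arcs X NG)"
  obtain e where grp: "group \<lparr>carrier = NG, mult = compose X, one = e\<rparr>"
    and maps: "NG \<subseteq> X \<rightarrow>\<^sub>E X" and not_bij: "\<not> NG \<subseteq> {f. bij_betw f X X}"
    using assms(3) unfolding NG_group_def by auto
  have "e \<in> NG" using monoid.one_closed[OF group.is_monoid[OF grp]] by simp
  obtain v where v: "v \<in> X" "e v \<noteq> v"
    using compose_group_bij_if_one_id[OF grp maps] not_bij by blast
  have "e v \<in> X" using maps \<open>e \<in> NG\<close> v(1) by auto
  then obtain z where "(z, v) \<in> NG_dig_arcs X NG"
    using strongly_connected_in_arc[OF sc _ v(1)] v(2) by metis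
  then obtain f x where "v = f x" "f \<in> NG" "x \<in> X"
    unfolding NG_dig_arcs_def by auto
  then show False using compose_group_one_fixes_image[OF grp] v(2) by auto
qed

end
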